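(* Let $G$ be a finite connected graph with node set $V$ and let $r$ be a ranking of $V$. Algorithm 1 (described in the context) run on $G$ and $r$ terminates and outputs a value, a node $c$ and a set $L$ such that the value equals $\operatorname{rad}(G)$, $e(c)=\operatorname{rad}(G)$ (i.e. $c$ is a center), and $L$ is a radius certificate with $L\subseteq A_r(V)$. It performs at most $2|L|+1$ one-to-all distance queries; in particular $O(|A_r(V)|)$ queries.
   Context: $G$ is undirected, unweighted, connected with finite node set $V$; $d$ is the shortest-path distance, $e(u)=\max_v d(u,v)$, $\operatorname{rad}(G)=\min_u e(u)$. A ranking $r$ is an injective map from $V$ to a totally ordered set; the antipode $A_r(u)$ is the node $v$ maximizing $(d(u,v),r(v))$ lexicographically, and $A_r(W)=\{A_r(u):u\in W\}$. A one-to-all distance query from $x$ computes $(d(x,v))_{v\in V}$. For $L\subseteq V$ let $e_L(v)=\max_{x\in L}d(v,x)$ ($=0$ if $L=\emptyset$). A radius certificate is a set $L$ with $e_L(v)\ge\operatorname{rad}(G)$ for all $v\in V$. Algorithm 1: start with $L=K=\emptyset$. Repeat iterations: (1) select $u\in V$ with $e_L(u)$ minimal (ties arbitrary); (2) query from $u$ and compute $e(u)$; (3) if $e(u)=e_L(u)$, halt and output $e(u)$, $u$, $L$; (4) otherwise let $a=A_r(u)$, query from $a$, add $u$ to $K$ and $a$ to $L$ and update $e_L$. After each iteration not halting in (3), if $\min_{v\in V}e_L(v)\ge\min_{w\in K}e(w)$, halt and output $e(c)$, $c$, $L$ where $c\in K$ minimizes $e$ over $K$; otherwise start a new iteration. 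*)

theory Defs
  imports Main
begin

inductive walk :: "('a \<Rightarrow> 'a \<Rightarrow> bool) \<Rightarrow> nat \<Rightarrow> 'a \<Rightarrow> 'a \<Rightarrow> bool" for E where
  walk0: "walk E 0 u u"
| walkS: "E u w \<Longrightarrow> walk E n w v \<Longrightarrow> walk E (Suc n) u v"

definition simple_graph :: "'a set \<Rightarrow> ('a \<Rightarrow> 'a \<Rightarrow> bool) \<Rightarrow> bool" where
  "simple_graph V E \<longleftrightarrow> (\<forall>u v. E u v \<longrightarrow> u \<in> V \<and> v \<in> V \<and> E v u \<and> u \<noteq> v)"

definition connected_graph :: "'a set \<Rightarrow> ('a \<Rightarrow> 'a \<Rightarrow> bool) \<Rightarrow> bool" where
  "connected_graph V E \<longleftrightarrow> V \<noteq> {} \<and> (\<forall>u\<in>V. \<forall>v\<in>V. \<exists>n. walk E n u v)"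

definition dist :: "('a \<Rightarrow> 'a \<Rightarrow> bool) \<Rightarrow> 'a \<Rightarrow> 'a \<Rightarrow> nat" where
  "dist E u v = (LEAST n. walk E n u v)"

definition ecc :: "'a set \<Rightarrow> ('a \<Rightarrow> 'a \<Rightarrow> bool) \<Rightarrow> 'a \<Rightarrow> nat" where
  "ecc V E u = Max (dist E u ` V)"

definition rad :: "'a set \<Rightarrow> ('a \<Rightarrow> 'a \<Rightarrow> bool) \<Rightarrow> nat" where
  "rad V E = Min (ecc V E ` V)"

definition antipode :: "'a set \<Rightarrow> ('a \<Rightarrow> 'a \<Rightarrow> bool) \<Rightarrow> ('a \<Rightarrow> 'b::linorder) \<Rightarrow> 'a \<Rightarrow> 'a" where
  "antipode V E r u = (THE v. v \<in> V \<and> (\<forall>w\<in>V. dist E u w < dist E u v \<or>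
                         (dist E u w = dist E u v \<and> r w \<le> r v)))"

definition eL :: "('a \<Rightarrow> 'a \<Rightarrow> bool) \<Rightarrow> 'a set \<Rightarrow> 'a \<Rightarrow> nat" where
  "eL E L v = (if L = {} then 0 else Max ((\<lambda>x. dist E v x) ` L))"

definition radius_certificate :: "'a set \<Rightarrow> ('a \<Rightarrow> 'a \<Rightarrow> bool) \<Rightarrow> 'a set \<Rightarrow> bool" where
  "radius_certificate V E L \<longleftrightarrow> (\<forall>v\<in>V. eL E L v \<ge> rad V E)"

text \<open>Configurations of Algorithm 1: Running L K q (q = number of queries performed so far),
  or Done value c L q (the output together with the total number of queries).\<close>
datatype 'a config = Running "'a set" "'a set" nat | Done nat 'a "'a set" nat

text \<open>One iteration of Algorithm 1 (nondeterministic in the tie-breaking choices).\<close>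
inductive alg_step :: "'a set \<Rightarrow> ('a \<Rightarrow> 'a \<Rightarrow> bool) \<Rightarrow> ('a \<Rightarrow> 'b::linorder)
                        \<Rightarrow> 'a config \<Rightarrow> 'a config \<Rightarrow> bool" for V E r where
  halt: "u \<in> V \<Longrightarrow> (\<forall>v\<in>V. eL E L u \<le> eL E L v) \<Longrightarrow> ecc V E u = eL E L u \<Longrightarrow>
         alg_step V E r (Running L K q) (Done (ecc V E u) u L (q + 1))"
| stop: "u \<in> V \<Longrightarrow> (\<forall>v\<in>V. eL E L u \<le> eL E L v) \<Longrightarrow> ecc V E u \<noteq> eL E L u \<Longrightarrow>
         a = antipode V E r u \<Longrightarrow>
         Min (eL E (insert a L) ` V) \<ge> Min (ecc V E ` insert u K) \<Longrightarrow>
         c \<in> insert u K \<Longrightarrow> (\<forall>w\<in>insert u K. ecc V E c \<le> ecc V E w) \<Longrightarrow>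
         alg_step V E r (Running L K q) (Done (ecc V E c) c (insert a L) (q + 2))"
| cont: "u \<in> V \<Longrightarrow> (\<forall>v\<in>V. eL E L u \<le> eL E L v) \<Longrightarrow> ecc V E u \<noteq> eL E L u \<Longrightarrow>
         a = antipode V E r u \<Longrightarrow>
         \<not> (Min (eL E (insert a L) ` V) \<ge> Min (ecc V E ` insert u K)) \<Longrightarrow>
         alg_step V E r (Running L K q) (Running (insert a L) (insert u K) (q + 2))"

definition alg_init :: "'a config" where
  "alg_init = Running {} {} 0"

definition alg_reachable :: "'a set \<Rightarrow> ('a \<Rightarrow> 'a \<Rightarrow> bool) \<Rightarrow> ('a \<Rightarrow> 'b::linorder) \<Rightarrow> 'a config \<Rightarrow> bool" where
  "alg_reachable V E r s \<longleftrightarrow> (alg_step V E r)\<^sup>*\<^sup>* alg_init s"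

end

theory Submission
  imports Defs
begin

text \<open>Since \<open>e\<^sub>L \<le> e\<close> pointwise, a node \<open>c\<close> whose eccentricity is below \<open>e\<^sub>L\<close> everywhere
  is a center, and then \<open>L\<close> is a radius certificate. Both ways in which Algorithm 1 halts
  produce such a pair \<open>(c, L)\<close>. Every non-halting iteration adds to \<open>L\<close> the antipode of a node
  \<open>u\<close> with \<open>e\<^sub>L(u) < e(u) = d(u, A\<^sub>r(u))\<close>, which is therefore new; so \<open>L \<subseteq> A\<^sub>r(V)\<close> grows
  by one element per two queries, which bounds both the number of iterations and the number
  of queries.\<close>

lemma eL_le_ecc:
  assumes "finite V" "L \<subseteq> V"
  shows "eL E L v \<le> ecc V E v"
  using assms by (auto simp: eL_def ecc_def intro!: Max_mono)

lemma dist_le_eL: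
  assumes "finite L" "x \<in> L"
  shows "dist E v x \<le> eL E L v"
  using assms by (auto simp: eL_def)

lemma rad_le_ecc: "finite V \<Longrightarrow> v \<in> V \<Longrightarrow> rad V E \<le> ecc V E v"
  by (simp add: rad_def)

lemma ex_ecc_eq_rad:
  assumes "finite V" "V \<noteq> {}"
  obtains v where "v \<in> V" "ecc V E v = rad V E"
proof -
  have "rad V E \<in> ecc V E ` V" unfolding rad_def using assms by (intro Min_in) auto
  then show thesis using that by auto
qed

lemma center_and_certificate_if_ecc_le_eL:
  assumes "finite V" "L \<subseteq> V" "c \<in> V" and le: "\<forall>v\<in>V. ecc V E c \<le> eL E L v"
  shows "ecc V E c = rad V E" and "radius_certificate V E L"
proof -
  obtain v where v: "v \<in> V" "ecc V E v = rad V E"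
    using ex_ecc_eq_rad assms(1,3) by blast
  have "ecc V E c \<le> rad V E"
    using le v eL_le_ecc[OF assms(1,2), of E v] by fastforce
  then show eq: "ecc V E c = rad V E"
    using rad_le_ecc[OF assms(1,3), of E] by linarith
  show "radius_certificate V E L"
    using le by (simp add: radius_certificate_def eq)
qed

lemma antipode_farthest:
  assumes fin: "finite V" and inj: "inj_on r V" and u: "u \<in> V"
  shows antipode_in: "antipode V E r u \<in> V"
    and dist_antipode: "dist E u (antipode V E r u) = ecc V E u"
proof -
  define P where "P v \<longleftrightarrow> v \<in> V \<and> (\<forall>w\<in>V. dist E u w < dist E u v \<or>
                              (dist E u w = dist E u v \<and> r w \<le> r v))" for v
  define far where "far = {v\<in>V. dist E u v = ecc V E u}"
  have "ecc V E u \<in> dist E u ` V"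
    unfolding ecc_def using fin u by (intro Max_in) auto
  then have "far \<noteq> {}" "finite far" using fin by (auto simp: far_def)
  then have "Max (r ` far) \<in> r ` far" by (intro Max_in) auto
  then obtain v where v: "v \<in> far" "r v = Max (r ` far)" by auto
  have dist_le: "dist E u w \<le> ecc V E u" if "w \<in> V" for w
    using fin that by (simp add: ecc_def)
  have "P v"
  proof -
    have "dist E u w < dist E u v \<or> (dist E u w = dist E u v \<and> r w \<le> r v)"
      if w: "w \<in> V" for w
    proof (cases "w \<in> far")
      case True
      then have "r w \<le> r v" using v(2) \<open>finite far\<close> by simp
      then show ?thesis using True v(1) by (simp add: far_def)
    next
      case False
      then show ?thesis using w v(1) dist_le[OF w] by (simp add: far_def)
    qed
    then show ?thesis using v(1) by (simp add: P_def far_def)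
  qed
  moreover have "w = v" if "P w" for w
  proof -
    have "dist E u w \<le> dist E u v" "dist E u v \<le> dist E u w"
      using \<open>P v\<close> \<open>P w\<close> unfolding P_def by fastforce+
    then have "r w \<le> r v" "r v \<le> r w"
      using \<open>P v\<close> \<open>P w\<close> unfolding P_def by fastforce+
    then show ?thesis using inj \<open>P v\<close> \<open>P w\<close> by (auto simp: P_def dest: inj_onD)
  qed
  ultimately have "antipode V E r u = v"
    unfolding antipode_def P_def[symmetric] by (rule the_equality)
  then show "antipode V E r u \<in> V" "dist E u (antipode V E r u) = ecc V E u"
    using v(1) by (auto simp: far_def)
qed

lemma antipode_image_subset:
  "finite V \<Longrightarrow> inj_on r V \<Longrightarrow> antipode V E r ` V \<subseteq> V"
  by (simp add: image_subset_iff antipode_in)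

lemma antipode_notin:
  assumes "finite V" "inj_on r V" "u \<in> V" "L \<subseteq> V" "ecc V E u \<noteq> eL E L u"
  shows "antipode V E r u \<notin> L"
proof
  assume "antipode V E r u \<in> L"
  then have "dist E u (antipode V E r u) \<le> eL E L u"
    using finite_subset[OF assms(4,1)] by (rule dist_le_eL[rotated])
  then have "ecc V E u \<le> eL E L u" by (simp add: dist_antipode[OF assms(1-3)])
  then show False using eL_le_ecc[OF assms(1,4), of E u] assms(5) by linarith
qed

definition valid_output ::
    "'a set \<Rightarrow> ('a \<Rightarrow> 'a \<Rightarrow> bool) \<Rightarrow> ('a \<Rightarrow> 'b::linorder) \<Rightarrow> nat \<Rightarrow> 'a \<Rightarrow> 'a set \<Rightarrow> nat \<Rightarrow> bool" where
  "valid_output V E r val c L q \<longleftrightarrow> val = rad V E \<and> c \<in> V \<and> ecc V E c = rad V E \<and>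
     radius_certificate V E L \<and> L \<subseteq> antipode V E r ` V \<and>
     q \<le> 2 * card L + 1 \<and> q \<le> 2 * card (antipode V E r ` V) + 1"

fun alg_invariant :: "'a set \<Rightarrow> ('a \<Rightarrow> 'a \<Rightarrow> bool) \<Rightarrow> ('a \<Rightarrow> 'b::linorder) \<Rightarrow> 'a config \<Rightarrow> bool" where
  "alg_invariant V E r (Running L K q) \<longleftrightarrow> L \<subseteq> antipode V E r ` V \<and> K \<subseteq> V \<and> q = 2 * card L"
| "alg_invariant V E r (Done val c L q) \<longleftrightarrow> valid_output V E r val c L q"

lemma alg_invariant_RunningD:
  assumes "finite V" "inj_on r V" "alg_invariant V E r (Running L K q)"
  shows "L \<subseteq> V" "finite L" "finite K"
proof -
  show "L \<subseteq> V" using assms antipode_image_subset[OF assms(1,2), of E] by auto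
  then show "finite L" using assms(1) by (rule finite_subset)
  have "K \<subseteq> V" using assms(3) by simp
  then show "finite K" using assms(1) by (rule finite_subset)
qed

lemma valid_output_if_ecc_le_eL:
  assumes "finite V" "inj_on r V" "L \<subseteq> antipode V E r ` V" "c \<in> V"
    and "\<forall>v\<in>V. ecc V E c \<le> eL E L v" and "q \<le> 2 * card L + 1"
  shows "valid_output V E r (ecc V E c) c L q"
proof -
  have "finite (antipode V E r ` V)" using assms(1) by simp
  then have "card L \<le> card (antipode V E r ` V)" using assms(3) by (rule card_mono)
  moreover have "L \<subseteq> V" using assms(3) antipode_image_subset[OF assms(1,2)] by blast
  ultimately show ?thesis
    using assms center_and_certificate_if_ecc_le_eL[of V L c E] by (auto simp: valid_output_def)
qed

lemma alg_step_preserves_invariant: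
  assumes fin: "finite V" and inj: "inj_on r V"
    and step: "alg_step V E r s s'" and inv: "alg_invariant V E r s"
  shows "alg_invariant V E r s'"
  using step
proof cases
  case (halt u L K q)
  have "valid_output V E r (ecc V E u) u L (q + 1)"
  proof (rule valid_output_if_ecc_le_eL[OF fin inj])
    show "L \<subseteq> antipode V E r ` V" "q + 1 \<le> 2 * card L + 1" using inv halt(1) by simp_all
    show "u \<in> V" "\<forall>v\<in>V. ecc V E u \<le> eL E L v" using halt(3-5) by simp_all
  qed
  then show ?thesis using halt(2) by simp
next
  case (stop u L a K c q)
  note inv' = inv[unfolded stop(1), simplified]
  have L: "L \<subseteq> V" "finite L" "finite K"
    using alg_invariant_RunningD[OF fin inj inv[unfolded stop(1)]] by simp_all
  have "a \<notin> L" using antipode_notin[OF fin inj stop(3) L(1)] stop(5,6) by simp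
  then have card: "card (insert a L) = card L + 1" using L(2) by simp
  have "ecc V E c \<le> Min (ecc V E ` insert u K)" using stop(9) L(3) by simp
  also have "\<dots> \<le> Min (eL E (insert a L) ` V)" using stop(7) .
  finally have c_le: "\<forall>v\<in>V. ecc V E c \<le> eL E (insert a L) v"
    using fin stop(3) by (subst (asm) Min_ge_iff) auto
  have "valid_output V E r (ecc V E c) c (insert a L) (q + 2)"
  proof (rule valid_output_if_ecc_le_eL[OF fin inj _ _ c_le])
    show "insert a L \<subseteq> antipode V E r ` V" using inv' stop(3,6) by blast
    show "c \<in> V" using inv' stop(3,8) by blast
    show "q + 2 \<le> 2 * card (insert a L) + 1" using inv' card by simp
  qed
  then show ?thesis using stop(2) by simp
next
  case (cont u L a K q)
  note inv' = inv[unfolded cont(1), simplified]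
  have L: "L \<subseteq> V" "finite L"
    using alg_invariant_RunningD[OF fin inj inv[unfolded cont(1)]] by simp_all
  have "a \<notin> L" using antipode_notin[OF fin inj cont(3) L(1)] cont(5,6) by simp
  then have "card (insert a L) = card L + 1" using L(2) by simp
  then show ?thesis using inv' cont(2,3,6) by auto
qed

lemma alg_reachable_invariant:
  assumes "finite V" "inj_on r V" "alg_reachable V E r s"
  shows "alg_invariant V E r s"
  using assms(3) unfolding alg_reachable_def
proof induction
  case base
  then show ?case by (simp add: alg_init_def)
next
  case (step s s')
  then show ?case using alg_step_preserves_invariant[OF assms(1,2)] by blast
qed

lemma running_has_step:
  assumes "finite V" "V \<noteq> {}" "finite K"
  shows "\<exists>s'. alg_step V E r (Running L K q) s'"
proof -
  have "Min (eL E L ` V) \<in> eL E L ` V" using assms(1,2) by (intro Min_in) auto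
  then obtain u where u: "u \<in> V" "eL E L u = Min (eL E L ` V)" by (metis imageE)
  then have umin: "\<forall>v\<in>V. eL E L u \<le> eL E L v" using assms(1) by simp
  have "Min (ecc V E ` insert u K) \<in> ecc V E ` insert u K" using assms(3) by (intro Min_in) auto
  then obtain c where c: "c \<in> insert u K" "ecc V E c = Min (ecc V E ` insert u K)" by (metis imageE)
  then have cmin: "\<forall>w\<in>insert u K. ecc V E c \<le> ecc V E w" using assms(3) by simp
  consider "ecc V E u = eL E L u"
    | "ecc V E u \<noteq> eL E L u"
      "Min (eL E (insert (antipode V E r u) L) ` V) \<ge> Min (ecc V E ` insert u K)"
    | "ecc V E u \<noteq> eL E L u"
      "\<not> Min (eL E (insert (antipode V E r u) L) ` V) \<ge> Min (ecc V E ` insert u K)"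
    by blast
  then show ?thesis
  proof cases
    case 1
    show ?thesis using alg_step.halt[OF u(1) umin 1] by blast
  next
    case 2
    show ?thesis using alg_step.stop[OF u(1) umin 2(1) refl 2(2) c(1) cmin] by blast
  next
    case 3
    show ?thesis using alg_step.cont[OF u(1) umin 3(1) refl 3(2)] by blast
  qed
qed

fun potential :: "nat \<Rightarrow> 'a config \<Rightarrow> nat" where
  "potential n (Running L K q) = Suc (n - card L)"
| "potential n (Done val c L q) = 0"

lemma alg_step_decreases_potential:
  assumes fin: "finite V" and inj: "inj_on r V"
    and "alg_reachable V E r s" and step: "alg_step V E r s s'"
  shows "potential (card V) s' < potential (card V) s"
  using step
proof cases
  case (cont u L a K q)
  have inv: "alg_invariant V E r s" "alg_invariant V E r s'"
    using alg_reachable_invariant[OF fin inj] assms(3) alg_step_preserves_invariant[OF fin inj step]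
    by blast+
  then have "card (insert a L) = card L + 1" using cont(1,2) by simp
  moreover have "card (insert a L) \<le> card V"
    using alg_invariant_RunningD(1)[OF fin inj inv(2)[unfolded cont(2)]] fin by (rule card_mono[rotated])
  ultimately show ?thesis using cont(1,2) by simp
qed auto

theorem theorem3:
  fixes V :: "'a set" and E :: "'a \<Rightarrow> 'a \<Rightarrow> bool" and r :: "'a \<Rightarrow> 'b::linorder"
  assumes "finite V" and "simple_graph V E" and "connected_graph V E" and "inj_on r V"
  shows "wf {(s', s). alg_reachable V E r s \<and> alg_step V E r s s'} \<and>
         (\<forall>s. alg_reachable V E r s \<longrightarrow>
           (\<exists>val c L q. s = Done val c L q) \<or> (\<exists>s'. alg_step V E r s s')) \<and>
         (\<forall>val c L q. alg_reachable V E r (Done val c L q) \<longrightarrow>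
           val = rad V E \<and> c \<in> V \<and> ecc V E c = rad V E \<and>
           radius_certificate V E L \<and> L \<subseteq> antipode V E r ` V \<and>
           q \<le> 2 * card L + 1 \<and> q \<le> 2 * card (antipode V E r ` V) + 1)"
proof -
  note fin = assms(1) and inj = assms(4)
  have "V \<noteq> {}" using assms(3) by (simp add: connected_graph_def)
  have wf: "wf {(s', s). alg_reachable V E r s \<and> alg_step V E r s s'}"
    by (rule wf_subset[OF wf_measure[of "potential (card V)"]])
      (auto dest: alg_step_decreases_potential[OF fin inj])
  have progress: "(\<exists>val c L q. s = Done val c L q) \<or> (\<exists>s'. alg_step V E r s s')"
    if "alg_reachable V E r s" for s
  proof (cases s)
    case (Running L K q)
    then have "finite K"
      using alg_invariant_RunningD(3)[OF fin inj] alg_reachable_invariant[OF fin inj that] by blast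
    then show ?thesis using running_has_step[OF fin \<open>V \<noteq> {}\<close>] Running by blast
  qed simp
  have "valid_output V E r val c L q" if "alg_reachable V E r (Done val c L q)" for val c L q
    using alg_reachable_invariant[OF fin inj that] by simp
  then show ?thesis using wf progress by (simp add: valid_output_def)
qed

end
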